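(* Let $T$ be a monoid and $Y$ a semilattice, and let $\cdot$ be a left partial action of $T$ on $Y$ satisfying axioms (A), (B), (C), with corresponding map $\varphi\colon T\to\mathcal{I}(Y)$, $t\mapsto\varphi_t$. The following are equivalent: (1) $M(T,Y)$ is an $F$-restriction monoid; (2) $\mathrm{dom}(\varphi_t)$ is a principal order ideal of $Y$ for every $t\in T$; (3) the image of $\varphi$ is contained in the Munn semigroup $T_Y$ of $Y$.
   Context: A left partial action of $T$ on $Y$ is a partial map $(t,y)\mapsto t\cdot y$ with $1\cdot y=y$ always defined and such that if $t\cdot y$ and $s\cdot(t\cdot y)$ are defined then $(st)\cdot y$ is defined and equals $s\cdot(t\cdot y)$. $\varphi_t$ is the partial injection $y\mapsto t\cdot y$; $\mathcal{I}(Y)$ is the monoid of partial injections of $Y$. Axioms: (A) $\mathrm{dom}\varphi_t$, $\mathrm{ran}\varphi_t$ are order ideals of $Y$; (B) $\varphi_t$ is an order-isomorphism from $\mathrm{dom}\varphi_t$ onto $\mathrm{ran}\varphi_t$; (C) $\mathrm{dom}\varphi_t\neq\varnothing$. Reverse right partial action: $y\circ t$ is defined iff $y\in\mathrm{ran}\varphi_t$, with $y\circ t=\varphi_t^{-1}(y)$. $M(T,Y)=\{(y,t)\in Y\times T\colon y\circ t\text{ defined}\}$ with $(x,s)(y,t)=(s\cdot((x\circ s)\wedge y),st)$, $(y,t)^*=(y\circ t,1)$, $(y,t)^+=(y,1)$; it is a restriction semigroup with projections $\{(y,1)\}$. A restriction semigroup is $F$-restriction if each class of the least congruence $\sigma$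 identifying all projections has a maximum element in the natural order ($a\le b$ iff $a=eb$ for a projection $e$). The Munn semigroup $T_Y$ is the inverse semigroup of all order-isomorphisms between principal order ideals of $Y$. *)

theory Defs
  imports Main
begin

(* A partial map  'y => 'y option  represents an element of I(Y). *)

definition order_ideal :: "'y::order set \<Rightarrow> bool" where
  "order_ideal I \<longleftrightarrow> (\<forall>x y. y \<in> I \<longrightarrow> x \<le> y \<longrightarrow> x \<in> I)"

definition principal_order_ideal :: "'y::order set \<Rightarrow> bool" where
  "principal_order_ideal I \<longleftrightarrow> (\<exists>a. I = {x. x \<le> a})"

definition order_iso_partial :: "('y::order \<Rightarrow> 'y option) \<Rightarrow> bool" where
  "order_iso_partial f \<longleftrightarrow>
     (\<forall>x\<in>dom f. \<forall>y\<in>dom f. x \<le> y \<longleftrightarrow> the (f x) \<le> the (f y))"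

(* left partial action of the monoid T on Y; act t y = Some (t . y) when defined *)
definition left_partial_action :: "('t::monoid_mult \<Rightarrow> 'y \<Rightarrow> 'y option) \<Rightarrow> bool" where
  "left_partial_action act \<longleftrightarrow>
     (\<forall>y. act 1 y = Some y) \<and>
     (\<forall>s t y z w. act t y = Some z \<longrightarrow> act s z = Some w \<longrightarrow> act (s * t) y = Some w)"

definition axiom_A :: "('t \<Rightarrow> 'y::order \<Rightarrow> 'y option) \<Rightarrow> bool" where
  "axiom_A act \<longleftrightarrow> (\<forall>t. order_ideal (dom (act t)) \<and> order_ideal (ran (act t)))"

definition axiom_B :: "('t \<Rightarrow> 'y::order \<Rightarrow> 'y option) \<Rightarrow> bool" where
  "axiom_B act \<longleftrightarrow> (\<forall>t. order_iso_partial (act t))"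

definition axiom_C :: "('t \<Rightarrow> 'y \<Rightarrow> 'y option) \<Rightarrow> bool" where
  "axiom_C act \<longleftrightarrow> (\<forall>t. dom (act t) \<noteq> {})"

(* reverse right partial action: y o t = phi_t^{-1}(y), meaningful for y \<in> ran phi_t *)
definition rev_act :: "('t \<Rightarrow> 'y \<Rightarrow> 'y option) \<Rightarrow> 'y \<Rightarrow> 't \<Rightarrow> 'y" where
  "rev_act act y t = (THE x. act t x = Some y)"

definition M_carrier :: "('t \<Rightarrow> 'y \<Rightarrow> 'y option) \<Rightarrow> ('y \<times> 't) set" where
  "M_carrier act = {(y, t). y \<in> ran (act t)}"

definition M_mult :: "('t::monoid_mult \<Rightarrow> 'y::semilattice_inf \<Rightarrow> 'y option)
    \<Rightarrow> 'y \<times> 't \<Rightarrow> 'y \<times> 't \<Rightarrow> 'y \<times> 't" where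
  "M_mult act a b = (case a of (x, s) \<Rightarrow> case b of (y, t) \<Rightarrow>
      (the (act s (inf (rev_act act x s) y)), s * t))"

definition M_proj :: "('t::monoid_mult \<Rightarrow> 'y \<Rightarrow> 'y option) \<Rightarrow> ('y \<times> 't) set" where
  "M_proj act = {(y, 1) | y. True}"

(* Generic notions for a semigroup given by a carrier S, multiplication m and
   a set P of projections. *)

definition natural_le :: "'a set \<Rightarrow> ('a \<Rightarrow> 'a \<Rightarrow> 'a) \<Rightarrow> 'a \<Rightarrow> 'a \<Rightarrow> bool" where
  "natural_le P m a b \<longleftrightarrow> (\<exists>e\<in>P. a = m e b)"

definition congruence_on :: "'a set \<Rightarrow> ('a \<Rightarrow> 'a \<Rightarrow> 'a) \<Rightarrow> 'a rel \<Rightarrow> bool" where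
  "congruence_on S m R \<longleftrightarrow> equiv S R \<and>
     (\<forall>a b c. (a, b) \<in> R \<longrightarrow> c \<in> S \<longrightarrow> (m c a, m c b) \<in> R \<and> (m a c, m b c) \<in> R)"

definition sigma_cong :: "'a set \<Rightarrow> ('a \<Rightarrow> 'a \<Rightarrow> 'a) \<Rightarrow> 'a set \<Rightarrow> 'a rel" where
  "sigma_cong S m P = \<Inter> {R. congruence_on S m R \<and> P \<times> P \<subseteq> R}"

definition F_restriction_monoid :: "'a set \<Rightarrow> ('a \<Rightarrow> 'a \<Rightarrow> 'a) \<Rightarrow> 'a set \<Rightarrow> bool" where
  "F_restriction_monoid S m P \<longleftrightarrow>
     (\<exists>e\<in>S. \<forall>a\<in>S. m e a = a \<and> m a e = a) \<and>
     (\<forall>a\<in>S. \<exists>u\<in>S. (a, u) \<in> sigma_cong S m P \<and>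
        (\<forall>b\<in>S. (a, b) \<in> sigma_cong S m P \<longrightarrow> natural_le P m b u))"

definition munn :: "('y::order \<Rightarrow> 'y option) set" where
  "munn = {f. principal_order_ideal (dom f) \<and> principal_order_ideal (ran f) \<and> order_iso_partial f}"

end

theory Submission
  imports Defs
begin

text \<open>
  The least congruence \<sigma> on M(T,Y) identifying the projections is the kernel of the
  projection (y, t) \<mapsto> t, and inside the \<sigma>-class of t, i.e. ran phi_t \<times> {t}, the natural
  order is the order of Y. So M(T,Y) is F-restriction iff every ran phi_t has a greatest
  element (for t = 1 this greatest element of Y gives the identity (\<top>, 1)). Since phi_t is
  an order-isomorphism between order ideals, ran phi_t has a greatest element iff dom phi_t
  does, and an order ideal has a greatest element iff it is principal.
\<close>

lemma principal_order_ideal_iff_greatest: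
  assumes "order_ideal I"
  shows "principal_order_ideal I \<longleftrightarrow> (\<exists>m\<in>I. \<forall>x\<in>I. x \<le> m)"
  using assms unfolding principal_order_ideal_def order_ideal_def by blast

lemma order_iso_partial_le_iff:
  assumes "order_iso_partial f" "f x = Some z" "f x' = Some z'"
  shows "x \<le> x' \<longleftrightarrow> z \<le> z'"
  using assms unfolding order_iso_partial_def by (metis domI option.sel)

lemma order_iso_partial_inj:
  assumes "order_iso_partial f" "f x = Some z" "f x' = Some z"
  shows "x = x'"
  using order_iso_partial_le_iff[OF assms] order_iso_partial_le_iff[OF assms(1,3,2)]
  by (simp add: order_antisym)

lemma order_iso_partial_greatest_dom_iff_ran:
  assumes "order_iso_partial f"
  shows "(\<exists>m\<in>dom f. \<forall>x\<in>dom f. x \<le> m) \<longleftrightarrow> (\<exists>n\<in>ran f. \<forall>z\<in>ran f. z \<le> n)"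
proof
  assume "\<exists>m\<in>dom f. \<forall>x\<in>dom f. x \<le> m"
  then obtain m n where mn: "f m = Some n" and greatest: "\<forall>x\<in>dom f. x \<le> m" by auto
  have "z \<le> n" if "z \<in> ran f" for z
  proof -
    from that obtain x where x: "f x = Some z" by (auto simp: ran_def)
    with greatest have "x \<le> m" by auto
    with order_iso_partial_le_iff[OF assms x mn] show ?thesis by simp
  qed
  with mn show "\<exists>n\<in>ran f. \<forall>z\<in>ran f. z \<le> n" by (auto simp: ran_def)
next
  assume "\<exists>n\<in>ran f. \<forall>z\<in>ran f. z \<le> n"
  then obtain m n where mn: "f m = Some n" and greatest: "\<forall>z\<in>ran f. z \<le> n"
    by (auto simp: ran_def)
  have "x \<le> m" if "x \<in> dom f" for x
  proof -
    from that obtain z where z: "f x = Some z" by auto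
    with greatest have "z \<le> n" by (auto simp: ran_def)
    with order_iso_partial_le_iff[OF assms z mn] show ?thesis by simp
  qed
  with mn show "\<exists>m\<in>dom f. \<forall>x\<in>dom f. x \<le> m" by auto
qed

lemma principal_dom_iff_principal_ran:
  assumes "order_iso_partial f" "order_ideal (dom f)" "order_ideal (ran f)"
  shows "principal_order_ideal (dom f) \<longleftrightarrow> principal_order_ideal (ran f)"
  using order_iso_partial_greatest_dom_iff_ran[OF assms(1)]
  by (simp add: principal_order_ideal_iff_greatest assms(2,3))

lemma principal_dom_iff_range_munn:
  assumes "axiom_A act" "axiom_B act"
  shows "(\<forall>t. principal_order_ideal (dom (act t))) \<longleftrightarrow> range act \<subseteq> munn"
  using assms principal_dom_iff_principal_ran
  unfolding axiom_A_def axiom_B_def munn_def by blast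

locale partial_action_ABC =
  fixes act :: "'t::monoid_mult \<Rightarrow> 'y::semilattice_inf \<Rightarrow> 'y option"
  assumes action: "left_partial_action act"
    and A: "axiom_A act" and B: "axiom_B act" and C: "axiom_C act"
begin

lemma act_one: "act 1 y = Some y"
  using action unfolding left_partial_action_def by blast

lemma act_mult: "act t y = Some z \<Longrightarrow> act s z = Some w \<Longrightarrow> act (s * t) y = Some w"
  using action unfolding left_partial_action_def by blast

lemma dom_act_downward: "x \<in> dom (act t) \<Longrightarrow> x' \<le> x \<Longrightarrow> x' \<in> dom (act t)"
  using A unfolding axiom_A_def order_ideal_def by blast

lemma ran_act_downward: "y \<in> ran (act t) \<Longrightarrow> y' \<le> y \<Longrightarrow> y' \<in> ran (act t)"
  using A unfolding axiom_A_def order_ideal_def by blast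

lemma rev_act_eq: "act t x = Some y \<Longrightarrow> rev_act act y t = x"
  unfolding rev_act_def using B order_iso_partial_inj
  by (metis (mono_tags, lifting) axiom_B_def the_equality)

lemma act_rev_act: "y \<in> ran (act t) \<Longrightarrow> act t (rev_act act y t) = Some y"
  unfolding ran_def using rev_act_eq by auto

lemma proj_in_M_carrier: "(y, 1) \<in> M_carrier act"
  using act_one by (auto simp: M_carrier_def ran_def)

lemma M_carrier_snd_nonempty: "\<exists>y. (y, t) \<in> M_carrier act"
  using C unfolding axiom_C_def M_carrier_def ran_def by fastforce

lemma M_mult_proj: "M_mult act (e, 1) (y, t) = (inf e y, t)"
  unfolding M_mult_def using rev_act_eq[OF act_one] act_one by simp

lemma M_mult_closed:
  assumes "(x, s) \<in> M_carrier act" "(y, t) \<in> M_carrier act"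
  shows "M_mult act (x, s) (y, t) \<in> M_carrier act"
proof -
  define v where "v = inf (rev_act act x s) y"
  have "act s (rev_act act x s) = Some x"
    using assms(1) act_rev_act by (auto simp: M_carrier_def)
  then obtain w where w: "act s v = Some w"
    using dom_act_downward[of "rev_act act x s" s v] by (auto simp: v_def)
  have "v \<in> ran (act t)"
    using ran_act_downward[of y t v] assms(2) by (auto simp: M_carrier_def v_def)
  then obtain q where "act t q = Some v" by (auto simp: ran_def)
  from act_mult[OF this w] have "w \<in> ran (act (s * t))" by (auto simp: ran_def)
  with w show ?thesis by (simp add: M_mult_def M_carrier_def v_def)
qed

lemma sigma_cong_M:
  "sigma_cong (M_carrier act) (M_mult act) (M_proj act)
     = {(a, b). a \<in> M_carrier act \<and> b \<in> M_carrier act \<and> snd a = snd b}"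
    (is "?\<sigma> = ?K")
proof
  have "congruence_on (M_carrier act) (M_mult act) ?K"
    unfolding congruence_on_def equiv_def refl_on_def sym_def trans_def
    using M_mult_closed by (auto simp: M_mult_def split: prod.splits)
  moreover have "M_proj act \<times> M_proj act \<subseteq> ?K"
    using proj_in_M_carrier by (auto simp: M_proj_def)
  ultimately show "?\<sigma> \<subseteq> ?K"
    unfolding sigma_cong_def by blast
next
  have "((x, s), (y, s)) \<in> R"
    if "(x, s) \<in> M_carrier act" "(y, s) \<in> M_carrier act"
      and R: "congruence_on (M_carrier act) (M_mult act) R" "M_proj act \<times> M_proj act \<subseteq> R"
    for x y s R
  proof -
    \<comment> \<open>both elements are \<sigma>-related to their meet (x \<sqinter> y, s) = (x, 1)(y, s) = (y, 1)(x, s)\<close>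
    have "((x, 1), (y, 1)) \<in> R" "((y, 1), (x, 1)) \<in> R"
      using R(2) by (auto simp: M_proj_def)
    with R(1) that(1,2) have
      "(M_mult act (x, 1) (y, s), M_mult act (y, 1) (y, s)) \<in> R"
      "(M_mult act (y, 1) (x, s), M_mult act (x, 1) (x, s)) \<in> R"
      unfolding congruence_on_def by blast+
    then have "((inf x y, s), (y, s)) \<in> R" "((inf x y, s), (x, s)) \<in> R"
      by (simp_all add: M_mult_proj inf_commute)
    with R(1) show ?thesis
      unfolding congruence_on_def equiv_def sym_def trans_def by blast
  qed
  then show "?K \<subseteq> ?\<sigma>"
    unfolding sigma_cong_def by auto
qed

lemma natural_le_M:
  assumes "(u, t) \<in> M_carrier act"
  shows "natural_le (M_proj act) (M_mult act) (b, t') (u, t) \<longleftrightarrow> t' = t \<and> b \<le> u"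
  unfolding natural_le_def M_proj_def
  by (auto simp: M_mult_proj inf_absorb1) (metis inf.absorb1 M_mult_proj)

lemma sigma_class_has_max_iff:
  assumes "(x, t) \<in> M_carrier act"
  shows "(\<exists>u\<in>M_carrier act. ((x, t), u) \<in> sigma_cong (M_carrier act) (M_mult act) (M_proj act) \<and>
            (\<forall>b\<in>M_carrier act. ((x, t), b) \<in> sigma_cong (M_carrier act) (M_mult act) (M_proj act)
               \<longrightarrow> natural_le (M_proj act) (M_mult act) b u))
         \<longleftrightarrow> principal_order_ideal (ran (act t))"
proof -
  have "order_ideal (ran (act t))"
    using A by (simp add: axiom_A_def)
  moreover have "(\<exists>u\<in>M_carrier act. snd u = t \<and>
                    (\<forall>b\<in>M_carrier act. snd b = t \<longrightarrow> natural_le (M_proj act) (M_mult act) b u))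
                 \<longleftrightarrow> (\<exists>m\<in>ran (act t). \<forall>z\<in>ran (act t). z \<le> m)"
    by (auto simp: natural_le_M) (auto simp: M_carrier_def natural_le_M)
  ultimately show ?thesis
    using assms by (simp add: sigma_cong_M principal_order_ideal_iff_greatest eq_commute)
qed

lemma top_proj_is_identity:
  assumes top: "\<And>y. y \<le> e" and a: "a \<in> M_carrier act"
  shows "M_mult act (e, 1) a = a \<and> M_mult act a (e, 1) = a"
proof -
  obtain x s where as: "a = (x, s)" by (cases a)
  have "act s (rev_act act x s) = Some x"
    using a as act_rev_act by (auto simp: M_carrier_def)
  then have "M_mult act a (e, 1) = a"
    using as top by (simp add: M_mult_def inf_absorb1)
  moreover have "M_mult act (e, 1) a = a"
    using as top by (simp add: M_mult_proj inf_absorb2)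
  ultimately show ?thesis by simp
qed

lemma F_restriction_M_iff_principal_ran:
  "F_restriction_monoid (M_carrier act) (M_mult act) (M_proj act)
     \<longleftrightarrow> (\<forall>t. principal_order_ideal (ran (act t)))"
proof
  assume "F_restriction_monoid (M_carrier act) (M_mult act) (M_proj act)"
  then show "\<forall>t. principal_order_ideal (ran (act t))"
    using M_carrier_snd_nonempty sigma_class_has_max_iff
    unfolding F_restriction_monoid_def by blast
next
  assume principal: "\<forall>t. principal_order_ideal (ran (act t))"
  then obtain e where "ran (act 1) = {y. y \<le> e}"
    unfolding principal_order_ideal_def by blast
  then have "y \<le> e" for y
    using act_one[of y] by (auto simp: ran_def)
  with top_proj_is_identity proj_in_M_carrier
  have "\<exists>e\<in>M_carrier act. \<forall>a\<in>M_carrier act. M_mult act e a = a \<and> M_mult act a e = a"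
    by blast
  with principal sigma_class_has_max_iff show
    "F_restriction_monoid (M_carrier act) (M_mult act) (M_proj act)"
    unfolding F_restriction_monoid_def by auto
qed

lemma F_restriction_M_iff_principal_dom:
  "F_restriction_monoid (M_carrier act) (M_mult act) (M_proj act)
     \<longleftrightarrow> (\<forall>t. principal_order_ideal (dom (act t)))"
  using A B principal_dom_iff_principal_ran F_restriction_M_iff_principal_ran
  unfolding axiom_A_def axiom_B_def by blast

end

theorem lemma3p5:
  fixes act :: "'t::monoid_mult \<Rightarrow> 'y::semilattice_inf \<Rightarrow> 'y option"
  assumes "left_partial_action act"
    and "axiom_A act" and "axiom_B act" and "axiom_C act"
  shows "(F_restriction_monoid (M_carrier act) (M_mult act) (M_proj act)
            \<longleftrightarrow> (\<forall>t. principal_order_ideal (dom (act t))))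
       \<and> ((\<forall>t. principal_order_ideal (dom (act t))) \<longleftrightarrow> range act \<subseteq> munn)"
proof -
  interpret partial_action_ABC act
    using assms by unfold_locales
  show ?thesis
    using F_restriction_M_iff_principal_dom principal_dom_iff_range_munn[OF assms(2,3)]
    by blast
qed

end
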